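(* Let ${\bm X}$ be a finite set with a pseudometric $d_{\bm X}$, let $C(x,x')=d_{\bm X}(x,x')$, and let $m^{\bm X}_\bullet$ be an irreducible and aperiodic Markov transition kernel on ${\bm X}$. Then for any $\nu_1,\nu_2\in\mathcal{P}({\bm X})$, $$\lim_{k\to\infty}d^{(k)}_{\mathrm{WL}}\big(({\bm X},m^{\bm X}_\bullet,\nu_1),({\bm X},m^{\bm X}_\bullet,\nu_2);C\big)=0.$$
   Context: $\mathcal{C}(\alpha,\beta)$ denotes the set of couplings. For finite Markov chains $\mathcal{X}=({\bm X},m^{\bm X}_\bullet,\nu^{\bm X})$, $\mathcal{Y}=({\bm Y},m^{\bm Y}_\bullet,\nu^{\bm Y})$, a Markovian coupling is a (possibly time-inhomogeneous) Markov chain $(X_t,Y_t)_{t\in\mathbb{N}}$ on ${\bm X}\times{\bm Y}$ with $\mathrm{law}(X_0,Y_0)\in\mathcal{C}(\nu^{\bm X},\nu^{\bm Y})$ and, for all $t,x,y$, the conditional law of $(X_{t+1},Y_{t+1})$ given $(X_t,Y_t)=(x,y)$ in $\mathcal{C}(m^{\bm X}_x,m^{\bm Y}_y)$. $d^{(k)}_{\mathrm{WL}}(\mathcal{X},\mathcal{Y};C)=\inf\mathbb{E}\,C(X_k,Y_k)$ over all Markovian couplings. *)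

theory Defs
  imports "HOL-Probability.Probability"
begin

definition couplings :: "'a pmf \<Rightarrow> 'b pmf \<Rightarrow> ('a \<times> 'b) pmf set" where
  "couplings \<alpha> \<beta> = {\<mu>. map_pmf fst \<mu> = \<alpha> \<and> map_pmf snd \<mu> = \<beta>}"

primrec chain_law :: "'s pmf \<Rightarrow> (nat \<Rightarrow> 's \<Rightarrow> 's pmf) \<Rightarrow> nat \<Rightarrow> 's pmf" where
  "chain_law \<mu>0 K 0 = \<mu>0"
| "chain_law \<mu>0 K (Suc t) = bind_pmf (chain_law \<mu>0 K t) (K t)"

definition markovian_coupling ::
  "('a \<Rightarrow> 'a pmf) \<Rightarrow> 'a pmf \<Rightarrow> ('b \<Rightarrow> 'b pmf) \<Rightarrow> 'b pmf
   \<Rightarrow> ('a \<times> 'b) pmf \<Rightarrow> (nat \<Rightarrow> 'a \<times> 'b \<Rightarrow> ('a \<times> 'b) pmf) \<Rightarrow> bool" where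
  "markovian_coupling mX \<nu>X mY \<nu>Y \<mu>0 K \<longleftrightarrow>
     \<mu>0 \<in> couplings \<nu>X \<nu>Y \<and> (\<forall>t x y. K t (x, y) \<in> couplings (mX x) (mY y))"

definition dWL ::
  "nat \<Rightarrow> ('a \<Rightarrow> 'a pmf) \<Rightarrow> 'a pmf \<Rightarrow> ('b \<Rightarrow> 'b pmf) \<Rightarrow> 'b pmf \<Rightarrow> ('a \<Rightarrow> 'b \<Rightarrow> real) \<Rightarrow> real" where
  "dWL k mX \<nu>X mY \<nu>Y C =
     (INF p \<in> {(\<mu>0, K). markovian_coupling mX \<nu>X mY \<nu>Y \<mu>0 K}.
        measure_pmf.expectation (chain_law (fst p) (snd p) k) (\<lambda>(x, y). C x y))"

primrec mstep :: "('a \<Rightarrow> 'a pmf) \<Rightarrow> nat \<Rightarrow> 'a \<Rightarrow> 'a pmf" where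
  "mstep m 0 x = return_pmf x"
| "mstep m (Suc n) x = bind_pmf (mstep m n x) m"

definition irreducible_kernel :: "('a \<Rightarrow> 'a pmf) \<Rightarrow> bool" where
  "irreducible_kernel m \<longleftrightarrow> (\<forall>x y. \<exists>n. pmf (mstep m n x) y > 0)"

definition aperiodic_kernel :: "('a \<Rightarrow> 'a pmf) \<Rightarrow> bool" where
  "aperiodic_kernel m \<longleftrightarrow> (\<forall>x. Gcd {n. n \<ge> 1 \<and> pmf (mstep m n x) x > 0} = (1::nat))"

definition pseudometric :: "('a \<Rightarrow> 'a \<Rightarrow> real) \<Rightarrow> bool" where
  "pseudometric d \<longleftrightarrow> (\<forall>x. d x x = 0) \<and> (\<forall>x y. d x y \<ge> 0) \<and> (\<forall>x y. d x y = d y x)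
     \<and> (\<forall>x y z. d x z \<le> d x y + d y z)"

end

theory Submission
  imports Defs
begin

text \<open>Couple the two chains by the coalescing coupling: the copies move independently until
  they meet and together afterwards, so the diagonal is absorbing and the cost vanishes there.
  Irreducibility and aperiodicity on a finite state space give a time \<open>T\<close> at which every
  state can reach every state; hence two copies started anywhere meet by time \<open>T\<close> with
  probability at least \<open>1 - c > 0\<close>, uniformly, and by the Markov property they are still apart at
  time \<open>k\<close> with probability at most \<open>c ^ (k div T)\<close>. The cost of the coupling at time \<open>k\<close> is
  therefore at most the diameter times \<open>c ^ (k div T)\<close>.\<close>

lemma nat_add_closed_mult:
  fixes M :: "nat set"
  assumes "0 \<in> M" and "\<And>a b. a \<in> M \<Longrightarrow> b \<in> M \<Longrightarrow> a + b \<in> M" and "a \<in> M"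
  shows "k * a \<in> M"
  by (induction k) (simp_all add: assms)

text \<open>The least positive gap \<open>g\<close> between two elements of \<open>M\<close> divides every element of \<open>M\<close>,
  because a nonzero remainder modulo \<open>g\<close> would be a smaller gap.\<close>
lemma nat_add_closed_Gcd_1_consecutive:
  fixes M :: "nat set"
  assumes zero: "0 \<in> M" and add: "\<And>a b. a \<in> M \<Longrightarrow> b \<in> M \<Longrightarrow> a + b \<in> M"
    and Gcd: "Gcd M = 1"
  obtains q where "q \<in> M" and "Suc q \<in> M"
proof -
  define D where "D = {d. 0 < d \<and> (\<exists>q\<in>M. q + d \<in> M)}"
  obtain s where "s \<in> M" "0 < s"
    using Gcd Gcd_0_iff[of M] by fastforce
  then have "s \<in> D"
    using zero unfolding D_def by (auto intro!: bexI[of _ 0])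
  define g where "g = (LEAST d. d \<in> D)"
  have "g \<in> D"
    unfolding g_def using \<open>s \<in> D\<close> by (rule LeastI)
  then obtain q where g: "0 < g" "q \<in> M" "q + g \<in> M"
    by (auto simp: D_def)
  have "g dvd s" if "s \<in> M" for s
  proof (rule ccontr)
    assume "\<not> g dvd s"
    then have "0 < s mod g"
      by (simp add: dvd_eq_mod_eq_0)
    have "(s div g) * (q + g) + s mod g = s + (s div g) * q"
      by (simp add: algebra_simps)
    also have "\<dots> \<in> M"
      using that g zero by (auto intro: add nat_add_closed_mult[where M = M])
    finally have "(s div g) * (q + g) + s mod g \<in> M" .
    moreover have "(s div g) * (q + g) \<in> M"
      using g zero by (auto intro: add nat_add_closed_mult[where M = M])
    ultimately have "s mod g \<in> D"
      using \<open>0 < s mod g\<close> unfolding D_def by blast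
    then have "g \<le> s mod g"
      unfolding g_def by (rule Least_le)
    moreover have "s mod g < g"
      using \<open>0 < g\<close> by simp
    ultimately show False
      by simp
  qed
  then have "g dvd Gcd M"
    by (rule Gcd_greatest)
  with Gcd g show thesis
    using that by simp
qed

lemma nat_add_closed_ge_square:
  fixes M :: "nat set"
  assumes zero: "0 \<in> M" and add: "\<And>a b. a \<in> M \<Longrightarrow> b \<in> M \<Longrightarrow> a + b \<in> M"
    and "q \<in> M" "Suc q \<in> M" and "q * q \<le> n"
  shows "n \<in> M"
proof (cases "q = 0")
  case True
  then show ?thesis
    using nat_add_closed_mult[OF zero add \<open>Suc q \<in> M\<close>, of n] by simp
next
  case False
  then have "n mod q < q" "q \<le> n div q"
    using \<open>q * q \<le> n\<close> by (simp_all add: less_eq_div_iff_mult_less_eq)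
  then have "n = (n div q - n mod q + n mod q) * q + n mod q"
    by simp
  also have "\<dots> = (n div q - n mod q) * q + (n mod q) * Suc q"
    by (simp add: algebra_simps)
  also have "\<dots> \<in> M"
    using assms by (intro add nat_add_closed_mult[OF zero add])
  finally show ?thesis .
qed

lemma nat_add_closed_Gcd_1_eventually:
  fixes M :: "nat set"
  assumes "0 \<in> M" and "\<And>a b. a \<in> M \<Longrightarrow> b \<in> M \<Longrightarrow> a + b \<in> M" and "Gcd M = 1"
  shows "eventually (\<lambda>n. n \<in> M) sequentially"
proof -
  obtain q where "q \<in> M" "Suc q \<in> M"
    using nat_add_closed_Gcd_1_consecutive[OF assms] by metis
  have "n \<in> M" if "q * q \<le> n" for n
    using assms(1,2) \<open>q \<in> M\<close> \<open>Suc q \<in> M\<close> that by (rule nat_add_closed_ge_square)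
  then show ?thesis
    by (rule eventually_sequentiallyI)
qed

lemma mstep_add: "mstep m (a + b) x = mstep m a x \<bind> mstep m b"
  by (induction b) (simp_all add: bind_return_pmf' bind_assoc_pmf)

lemma aperiodic_kernel_eventually_return:
  assumes "aperiodic_kernel m"
  shows "eventually (\<lambda>n. x \<in> set_pmf (mstep m n x)) sequentially"
proof -
  let ?M = "{n. x \<in> set_pmf (mstep m n x)}"
  have "?M = insert 0 {n. n \<ge> 1 \<and> pmf (mstep m n x) x > 0}"
    by (auto simp: pmf_positive_iff)
  then have "Gcd ?M = 1"
    using assms by (simp add: aperiodic_kernel_def)
  moreover have "a + b \<in> ?M" if "a \<in> ?M" "b \<in> ?M" for a b
    using that by (auto simp: mstep_add intro!: bexI[of _ x])
  ultimately have "eventually (\<lambda>n. n \<in> ?M) sequentially"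
    by (intro nat_add_closed_Gcd_1_eventually) auto
  then show ?thesis
    by simp
qed

lemma irreducible_aperiodic_eventually_full_support:
  fixes m :: "'a::finite \<Rightarrow> 'a pmf"
  assumes irreducible: "irreducible_kernel m" and aperiodic: "aperiodic_kernel m"
  shows "eventually (\<lambda>n. \<forall>x y. y \<in> set_pmf (mstep m n x)) sequentially"
proof -
  have "eventually (\<lambda>n. y \<in> set_pmf (mstep m n x)) sequentially" for x y
  proof -
    obtain r where r: "y \<in> set_pmf (mstep m r x)"
      using irreducible by (auto simp: irreducible_kernel_def pmf_positive_iff)
    obtain N where N: "\<And>n. n \<ge> N \<Longrightarrow> y \<in> set_pmf (mstep m n y)"
      using aperiodic_kernel_eventually_return[OF aperiodic, of y]
      by (auto simp: eventually_sequentially)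
    show ?thesis
    proof (rule eventually_sequentiallyI[of "r + N"])
      fix n assume "r + N \<le> n"
      then have "mstep m n x = mstep m r x \<bind> mstep m (n - r)"
        using mstep_add[of m r "n - r" x] by simp
      then show "y \<in> set_pmf (mstep m n x)"
        using r N[of "n - r"] \<open>r + N \<le> n\<close> by (auto intro!: bexI[of _ y])
    qed
  qed
  then show ?thesis
    by (intro eventually_all_finite)
qed

lemma chain_law_homogeneous: "chain_law \<mu> (\<lambda>_. K) n = \<mu> \<bind> mstep K n"
  by (induction n) (simp_all add: bind_return_pmf' bind_assoc_pmf)

lemma measure_pmf_prob_bind:
  "measure_pmf.prob (bind_pmf M N) A = (\<integral>x. measure_pmf.prob (N x) A \<partial>measure_pmf M)"
  unfolding measure_pmf_bind
  by (rule measure_pmf.measure_bind[where N = "count_space UNIV"])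
    (auto intro: measurable_pmf_measure2 measure_pmf_in_subprob_algebra)

lemma measure_pmf_prob_bind_le:
  assumes "\<And>x. measure_pmf.prob (N x) A \<le> b"
  shows "measure_pmf.prob (bind_pmf M N) A \<le> b"
proof -
  have "measure_pmf.prob (bind_pmf M N) A \<le> (\<integral>x. b \<partial>measure_pmf M)"
    unfolding measure_pmf_prob_bind
    using assms by (intro integral_mono) (auto intro: measure_pmf.integrable_const_bound[where B = 1])
  then show ?thesis
    by simp
qed

lemma set_pmf_mstep_closed:
  assumes "\<And>s. s \<in> A \<Longrightarrow> set_pmf (K s) \<subseteq> A" and "s \<in> A"
  shows "set_pmf (mstep K n s) \<subseteq> A"
  using assms by (induction n) auto

lemma prob_mstep_outside_absorbing_le_power:
  assumes closed: "\<And>s. s \<in> A \<Longrightarrow> set_pmf (K s) \<subseteq> A"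
    and outside: "\<And>s. measure_pmf.prob (mstep K T s) (- A) \<le> c" and "0 \<le> c"
  shows "measure_pmf.prob (mstep K (j * T + r) s) (- A) \<le> c ^ j"
proof (induction j arbitrary: s)
  case (Suc j)
  have "measure_pmf.prob (mstep K (Suc j * T + r) s) (- A)
      = (\<integral>s'. measure_pmf.prob (mstep K (j * T + r) s') (- A) \<partial>measure_pmf (mstep K T s))"
    unfolding measure_pmf_prob_bind[symmetric] mstep_add[symmetric] by (simp add: add.assoc)
  also have "\<dots> \<le> (\<integral>s'. c ^ j * indicator (- A) s' \<partial>measure_pmf (mstep K T s))"
  proof (rule integral_mono)
    fix s'
    show "measure_pmf.prob (mstep K (j * T + r) s') (- A) \<le> c ^ j * indicator (- A) s'"
    proof (cases "s' \<in> A")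
      case True
      then have "set_pmf (mstep K (j * T + r) s') \<inter> - A = {}"
        using set_pmf_mstep_closed[of A K s' "j * T + r", OF closed] by auto
      then have "measure_pmf.prob (mstep K (j * T + r) s') (- A) = 0"
        by (simp add: measure_pmf_zero_iff)
      then show ?thesis
        using True by simp
    qed (simp add: Suc.IH)
  next
    show "integrable (mstep K T s) (\<lambda>s'. measure_pmf.prob (mstep K (j * T + r) s') (- A))"
      by (rule measure_pmf.integrable_const_bound[where B = 1]) auto
    show "integrable (mstep K T s) (\<lambda>s'. c ^ j * indicator (- A) s')"
      using \<open>0 \<le> c\<close>
      by (intro measure_pmf.integrable_const_bound[where B = "c ^ j"]) (auto simp: indicator_def)
  qed
  also have "\<dots> = c ^ j * measure_pmf.prob (mstep K T s) (- A)"
    by simp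
  also have "\<dots> \<le> c ^ j * c"
    using outside[of s] \<open>0 \<le> c\<close> by (simp add: mult_left_mono)
  also have "\<dots> = c ^ Suc j"
    by (simp add: mult.commute)
  finally show ?case .
qed simp

definition coalescing_kernel :: "('a \<Rightarrow> 'a pmf) \<Rightarrow> 'a \<times> 'a \<Rightarrow> ('a \<times> 'a) pmf" where
  "coalescing_kernel m = (\<lambda>(x, y).
     if x = y then map_pmf (\<lambda>z. (z, z)) (m x) else pair_pmf (m x) (m y))"

lemma coalescing_kernel_in_couplings: "coalescing_kernel m (x, y) \<in> couplings (m x) (m y)"
  by (auto simp: coalescing_kernel_def couplings_def map_fst_pair_pmf map_snd_pair_pmf
      pmf.map_comp o_def)

lemma set_pmf_coalescing_kernel_Id: "s \<in> Id \<Longrightarrow> set_pmf (coalescing_kernel m s) \<subseteq> Id"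
  by (auto simp: coalescing_kernel_def)

lemma set_pmf_mstep_coalescing_kernel:
  assumes "u \<in> set_pmf (mstep m n x)" and "v \<in> set_pmf (mstep m n y)"
  shows "(u, v) \<in> set_pmf (mstep (coalescing_kernel m) n (x, y))
    \<or> set_pmf (mstep (coalescing_kernel m) n (x, y)) \<inter> Id \<noteq> {}"
  using assms
proof (induction n arbitrary: u v)
  case (Suc n)
  obtain a b where a: "a \<in> set_pmf (mstep m n x)" "u \<in> set_pmf (m a)"
    and b: "b \<in> set_pmf (mstep m n y)" "v \<in> set_pmf (m b)"
    using Suc.prems by auto
  from Suc.IH[OF a(1) b(1)] show ?case
  proof
    assume "(a, b) \<in> set_pmf (mstep (coalescing_kernel m) n (x, y))"
    moreover have "(u, u) \<in> set_pmf (coalescing_kernel m (a, b)) \<or>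
        (u, v) \<in> set_pmf (coalescing_kernel m (a, b))"
      using a b by (auto simp: coalescing_kernel_def)
    ultimately show ?thesis
      by auto
  next
    assume "set_pmf (mstep (coalescing_kernel m) n (x, y)) \<inter> Id \<noteq> {}"
    then obtain w where w: "(w, w) \<in> set_pmf (mstep (coalescing_kernel m) n (x, y))"
      by auto
    obtain z where "z \<in> set_pmf (m w)"
      using set_pmf_not_empty by fast
    then have "(z, z) \<in> set_pmf (coalescing_kernel m (w, w))"
      by (auto simp: coalescing_kernel_def)
    then show ?thesis
      using w by auto
  qed
qed simp

lemma coalescing_kernel_may_meet:
  assumes "w \<in> set_pmf (mstep m n x)" and "w \<in> set_pmf (mstep m n y)"
  shows "measure_pmf.prob (mstep (coalescing_kernel m) n (x, y)) (- Id) < 1"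
proof -
  obtain z where "z \<in> set_pmf (mstep (coalescing_kernel m) n (x, y))" "z \<in> Id"
    using set_pmf_mstep_coalescing_kernel[OF assms] by auto
  then have "0 < measure_pmf.prob (mstep (coalescing_kernel m) n (x, y)) Id"
    by (rule measure_pmf_posI)
  moreover have "measure_pmf.prob (mstep (coalescing_kernel m) n (x, y)) (- Id)
      = 1 - measure_pmf.prob (mstep (coalescing_kernel m) n (x, y)) Id"
    using measure_pmf.prob_compl[of Id "mstep (coalescing_kernel m) n (x, y)"]
    by (simp add: Compl_eq_Diff_UNIV)
  ultimately show ?thesis
    by simp
qed

lemma coalescing_kernel_meets_geometrically:
  fixes m :: "'a::finite \<Rightarrow> 'a pmf"
  assumes "irreducible_kernel m" and "aperiodic_kernel m"
  obtains T c where "0 < T" "0 \<le> c" "c < 1"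
    "\<And>s k. measure_pmf.prob (mstep (coalescing_kernel m) k s) (- Id) \<le> c ^ (k div T)"
proof -
  obtain N where "\<And>n. n \<ge> N \<Longrightarrow> \<forall>x y. y \<in> set_pmf (mstep m n x)"
    using irreducible_aperiodic_eventually_full_support[OF assms]
    by (auto simp: eventually_sequentially)
  then obtain T where "0 < T" and full: "\<And>x y. y \<in> set_pmf (mstep m T x)"
    using le_SucI[of N N] by blast
  define q where "q s = measure_pmf.prob (mstep (coalescing_kernel m) T s) (- Id)" for s
  define c where "c = Max (range q)"
  have "q s < 1" for s
    using coalescing_kernel_may_meet[OF full full] unfolding q_def by (cases s) blast
  then have "c < 1"
    by (simp add: c_def)
  have q_le_c: "q s \<le> c" for s
    by (simp add: c_def)
  then have "0 \<le> c"
    using measure_nonneg[of _ "- Id"] unfolding q_def by (meson order_trans)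
  with q_le_c have "measure_pmf.prob (mstep (coalescing_kernel m) k s) (- Id) \<le> c ^ (k div T)" for s k
    using prob_mstep_outside_absorbing_le_power[of Id "coalescing_kernel m" T c "k div T" "k mod T" s]
    by (simp add: q_def set_pmf_coalescing_kernel_Id)
  then show thesis
    using that \<open>0 < T\<close> \<open>0 \<le> c\<close> \<open>c < 1\<close> by blast
qed

lemma markovian_coupling_pair_pmf:
  "markovian_coupling mX \<nu>X mY \<nu>Y (pair_pmf \<nu>X \<nu>Y) (\<lambda>_ (x, y). pair_pmf (mX x) (mY y))"
  by (simp add: markovian_coupling_def couplings_def map_fst_pair_pmf map_snd_pair_pmf)

lemma expectation_split_nonneg:
  fixes C :: "'a \<Rightarrow> 'b \<Rightarrow> real"
  assumes "\<And>x y. 0 \<le> C x y"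
  shows "0 \<le> measure_pmf.expectation \<mu> (\<lambda>(x, y). C x y)"
  by (rule integral_nonneg_AE) (simp add: assms split_beta)

lemma dWL_nonneg:
  assumes "\<And>x y. 0 \<le> C x y"
  shows "0 \<le> dWL k mX \<nu>X mY \<nu>Y C"
  unfolding dWL_def
proof (rule cINF_greatest)
  show "{(\<mu>0, K). markovian_coupling mX \<nu>X mY \<nu>Y \<mu>0 K} \<noteq> {}"
    using markovian_coupling_pair_pmf by blast
qed (rule expectation_split_nonneg[OF assms])

lemma dWL_le_markovian_coupling:
  assumes "\<And>x y. 0 \<le> C x y" and "markovian_coupling mX \<nu>X mY \<nu>Y \<mu>0 K"
  shows "dWL k mX \<nu>X mY \<nu>Y C \<le> measure_pmf.expectation (chain_law \<mu>0 K k) (\<lambda>(x, y). C x y)"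
  unfolding dWL_def
proof (rule cINF_lower2[where x = "(\<mu>0, K)"])
  show "bdd_below ((\<lambda>p. measure_pmf.expectation (chain_law (fst p) (snd p) k) (\<lambda>(x, y). C x y)) `
      {(\<mu>0, K). markovian_coupling mX \<nu>X mY \<nu>Y \<mu>0 K})"
    by (rule bdd_belowI[where m = 0]) (auto simp: expectation_split_nonneg[OF assms(1)])
  show "(\<mu>0, K) \<in> {(\<mu>0, K). markovian_coupling mX \<nu>X mY \<nu>Y \<mu>0 K}"
    using assms(2) by simp
qed simp

lemma expectation_le_prob_off_diagonal:
  fixes \<mu> :: "('a \<times> 'a) pmf"
  assumes "\<And>x. C x x = 0" and "\<And>x y. 0 \<le> C x y" and "\<And>x y. C x y \<le> D"
  shows "measure_pmf.expectation \<mu> (\<lambda>(x, y). C x y) \<le> D * measure_pmf.prob \<mu> (- Id)"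
proof -
  have "measure_pmf.expectation \<mu> (\<lambda>(x, y). C x y) \<le> (\<integral>s. D * indicator (- Id) s \<partial>measure_pmf \<mu>)"
  proof (rule integral_mono)
    show "integrable (measure_pmf \<mu>) (\<lambda>(x, y). C x y)"
      using assms by (intro measure_pmf.integrable_const_bound[where B = D]) auto
    show "integrable (measure_pmf \<mu>) (\<lambda>s. D * indicator (- Id) s)"
      using assms(3)[of undefined undefined] assms(1)
      by (intro measure_pmf.integrable_const_bound[where B = D]) (auto simp: indicator_def)
  qed (use assms in \<open>auto simp: indicator_def\<close>)
  then show ?thesis
    by simp
qed

lemma LIMSEQ_power_div_zero:
  fixes c :: real
  assumes "0 \<le> c" "c < 1" "0 < T"
  shows "(\<lambda>k. c ^ (k div T)) \<longlonglongrightarrow> 0"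
proof -
  have "filterlim (\<lambda>k. k div T) at_top sequentially"
    unfolding filterlim_at_top
  proof
    fix z :: nat
    show "eventually (\<lambda>k. z \<le> k div T) sequentially"
      using assms(3)
      by (intro eventually_sequentiallyI[of "z * T"]) (simp add: less_eq_div_iff_mult_less_eq)
  qed
  then show ?thesis
    using filterlim_compose[OF LIMSEQ_power_zero[of c]] assms by simp
qed

lemma dWL_le_coalescing:
  fixes C :: "'a \<Rightarrow> 'a \<Rightarrow> real"
  assumes "\<And>x. C x x = 0" and "\<And>x y. 0 \<le> C x y" and "\<And>x y. C x y \<le> D"
    and apart: "\<And>s. measure_pmf.prob (mstep (coalescing_kernel m) k s) (- Id) \<le> b"
  shows "dWL k m \<nu>1 m \<nu>2 C \<le> D * b"
proof -
  let ?\<mu> = "chain_law (pair_pmf \<nu>1 \<nu>2) (\<lambda>_. coalescing_kernel m) k"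
  have "markovian_coupling m \<nu>1 m \<nu>2 (pair_pmf \<nu>1 \<nu>2) (\<lambda>_. coalescing_kernel m)"
    using coalescing_kernel_in_couplings[of m] markovian_coupling_pair_pmf[of m \<nu>1 m \<nu>2]
    by (simp add: markovian_coupling_def)
  then have "dWL k m \<nu>1 m \<nu>2 C \<le> measure_pmf.expectation ?\<mu> (\<lambda>(x, y). C x y)"
    by (rule dWL_le_markovian_coupling[OF assms(2)])
  also have "\<dots> \<le> D * measure_pmf.prob ?\<mu> (- Id)"
    by (rule expectation_le_prob_off_diagonal) (simp_all add: assms(1-3))
  also have "\<dots> \<le> D * b"
    unfolding chain_law_homogeneous using order_trans[OF assms(2,3)]
    by (intro mult_left_mono measure_pmf_prob_bind_le apart)
  finally show ?thesis .
qed

theorem lemma25: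
  fixes d :: "'a::finite \<Rightarrow> 'a \<Rightarrow> real" and m :: "'a \<Rightarrow> 'a pmf" and \<nu>1 \<nu>2 :: "'a pmf"
  assumes "pseudometric d"
    and "irreducible_kernel m"
    and "aperiodic_kernel m"
  shows "(\<lambda>k. dWL k m \<nu>1 m \<nu>2 d) \<longlonglongrightarrow> 0"
proof -
  obtain T c where "0 < T" "0 \<le> c" "c < 1" and apart:
    "\<And>s k. measure_pmf.prob (mstep (coalescing_kernel m) k s) (- Id) \<le> c ^ (k div T)"
    using coalescing_kernel_meets_geometrically[OF assms(2,3)] by metis
  define D where "D = Max (range (case_prod d))"
  have d: "d x x = 0" "0 \<le> d x y" for x y
    using assms(1) by (auto simp: pseudometric_def)
  have D: "d x y \<le> D" for x y
    unfolding D_def by (rule Max_ge) auto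
  show ?thesis
  proof (rule tendsto_sandwich)
    show "\<forall>\<^sub>F k in sequentially. 0 \<le> dWL k m \<nu>1 m \<nu>2 d"
      by (simp add: dWL_nonneg d)
    show "\<forall>\<^sub>F k in sequentially. dWL k m \<nu>1 m \<nu>2 d \<le> D * c ^ (k div T)"
      by (simp add: dWL_le_coalescing d D apart)
    show "(\<lambda>k. D * c ^ (k div T)) \<longlonglongrightarrow> 0"
      using LIMSEQ_power_div_zero[OF \<open>0 \<le> c\<close> \<open>c < 1\<close> \<open>0 < T\<close>]
      by (rule tendsto_mult_right_zero)
  qed simp
qed

end
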